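(* Let $F$ be a field, let $X$ be a topological space and let $X_1, X_2 \subseteq X$ be subspaces with $\mathrm{cl}_X(X_1) \cap \mathrm{cl}_X(X_2) = \emptyset$. Let $q \geq 0$ be an integer, and assume the singular homology groups $H_q(X_1;F)$, $H_q(X_2;F)$, $H_q(X;F)$ are finite-dimensional. Let $\rho_i : H_q(X_i;F) \to H_q(X;F)$ ($i=1,2$) be induced by the inclusions, and let $\Gamma = \{ (s_1,s_2) \in H_q(X_1;F) \oplus H_q(X_2;F) : \rho_1(s_1) = \rho_2(s_2) \}$. Consider the persistent homology $\mathcal{P}_q(\mathcal{G}_1) : 0 \to H_q(X_1;F) \to H_q(X_1 \cup X_2;F) \to H_q(X;F)$ of the filtration $\mathcal{G}_1 : \emptyset \subseteq X_1 \subseteq X_1 \cup X_2 \subseteq X$ (indexed $0,1,2,3$, maps induced by inclusions). Then the number of barcodes $(3,+\infty)$ in $\mathcal{P}_q(\mathcal{G}_1)$ equals $$\dim_F H_q(X;F) - \dim_F H_q(X_1;F) - \dim_F H_q(X_2;F) + \dim_F \Gamma.$$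
   Context: Homology is singular homology with coefficients in $F$. For a filtration $\emptyset = Y_0 \subseteq Y_1 \subseteq \cdots \subseteq Y_n$, $\rho_{i,j} : H_q(Y_i;F) \to H_q(Y_j;F)$ denotes the map induced by inclusion. An element $s \in H_q(Y_i;F)$ is born at $i$ if $s \notin \operatorname{im}(\rho_{i-1,i})$; it dies at $j$ if $\rho_{i,j-1}(s) \notin \operatorname{im}(\rho_{i-1,j-1})$ and $\rho_{i,j}(s) \in \operatorname{im}(\rho_{i-1,j})$, and its death is $+\infty$ if it is still alive at $n$. The pair (birth, death) is its persistence barcode; the barcodes of the persistent homology form a multiset (the interval decomposition of the persistence module), and "the number of barcodes $(3,+\infty)$" is the multiplicity of the bar born at index $3$ that never dies. *)

theory Defs
  imports "HOL-Homology.Homology" "HOL-Library.Function_Algebras" "HOL-Library.Product_Plus"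
begin

text \<open>Singular chains with coefficients in a field 'f: finitely supported functions from
singular simplices to 'f, with pointwise vector space operations.\<close>

type_synonym ('a,'f) fchain = "((nat \<Rightarrow> real) \<Rightarrow> 'a) \<Rightarrow> 'f"

definition fscale :: "'f::field \<Rightarrow> ('a,'f) fchain \<Rightarrow> ('a,'f) fchain"
  where "fscale r c = (\<lambda>\<sigma>. r * c \<sigma>)"

definition pscale :: "'f::field \<Rightarrow> ('a,'f) fchain \<times> ('a,'f) fchain \<Rightarrow> ('a,'f) fchain \<times> ('a,'f) fchain"
  where "pscale r v = (fscale r (fst v), fscale r (snd v))"

definition fsingular_chain :: "nat \<Rightarrow> 'a topology \<Rightarrow> ('a,'f::field) fchain \<Rightarrow> bool"
  where "fsingular_chain p X c \<longleftrightarrow>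
           finite {\<sigma>. c \<sigma> \<noteq> 0} \<and> (\<forall>\<sigma>. c \<sigma> \<noteq> 0 \<longrightarrow> singular_simplex p X \<sigma>)"

definition fchain_boundary :: "nat \<Rightarrow> ('a,'f::field) fchain \<Rightarrow> ('a,'f) fchain"
  where "fchain_boundary p c =
    (if p = 0 then 0 else
      (\<lambda>\<tau>. \<Sum>\<sigma>\<in>{\<sigma>. c \<sigma> \<noteq> 0}. c \<sigma> * (\<Sum>k\<le>p. if singular_face p k \<sigma> = \<tau> then (-1) ^ k else 0)))"

definition fcycles :: "nat \<Rightarrow> 'a topology \<Rightarrow> ('a,'f::field) fchain set"
  where "fcycles p X = {c. fsingular_chain p X c \<and> fchain_boundary p c = 0}"

definition fboundaries :: "nat \<Rightarrow> 'a topology \<Rightarrow> ('a,'f::field) fchain set"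
  where "fboundaries p X = fchain_boundary (Suc p) ` {c. fsingular_chain (Suc p) X c}"

text \<open>Dimension of a quotient U/W of subspaces (W \<subseteq> U) of a vector space with scaling s:
the least size of a finite subset of U that spans U modulo W.\<close>

definition fin_dim_quot :: "('f::field \<Rightarrow> 'v::ab_group_add \<Rightarrow> 'v) \<Rightarrow> 'v set \<Rightarrow> 'v set \<Rightarrow> bool"
  where "fin_dim_quot s U W \<longleftrightarrow> (\<exists>B. finite B \<and> B \<subseteq> U \<and> U \<subseteq> module.span s (B \<union> W))"

definition dim_quot :: "('f::field \<Rightarrow> 'v::ab_group_add \<Rightarrow> 'v) \<Rightarrow> 'v set \<Rightarrow> 'v set \<Rightarrow> nat"
  where "dim_quot s U W =
    (LEAST n. \<exists>B. finite B \<and> card B = n \<and> B \<subseteq> U \<and> U \<subseteq> module.span s (B \<union> W))"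

text \<open>H_q(Y;F) = Z_q(Y)/B_q(Y) for the subspace Y of X.\<close>

definition fhomology_findim :: "'f::field itself \<Rightarrow> nat \<Rightarrow> 'a topology \<Rightarrow> 'a set \<Rightarrow> bool"
  where "fhomology_findim F q X Y \<longleftrightarrow>
     fin_dim_quot (fscale :: 'f \<Rightarrow> _) (fcycles q (subtopology X Y)) (fboundaries q (subtopology X Y))"

definition fhomology_dim :: "'f::field itself \<Rightarrow> nat \<Rightarrow> 'a topology \<Rightarrow> 'a set \<Rightarrow> nat"
  where "fhomology_dim F q X Y =
     dim_quot (fscale :: 'f \<Rightarrow> _) (fcycles q (subtopology X Y)) (fboundaries q (subtopology X Y))"

text \<open>Image of rho_{Y,Y'} : H_q(Y;F) \<rightarrow> H_q(Y';F) (Y \<subseteq> Y'), as the subspace of cycles of Y'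
  given by (Z_q(Y) + B_q(Y')); the image itself is this subspace modulo B_q(Y').\<close>

definition fimage_cycles :: "'f::field itself \<Rightarrow> nat \<Rightarrow> 'a topology \<Rightarrow> 'a set \<Rightarrow> 'a set \<Rightarrow> ('a,'f::field) fchain set"
  where "fimage_cycles F q X Y Y' =
     module.span (fscale :: 'f \<Rightarrow> _)
       (fcycles q (subtopology X Y) \<union> fboundaries q (subtopology X Y'))"

text \<open>Multiplicity of the bar (i,+\<infinity>) in the persistent homology P_q of a filtration
  Y 0 = {} \<subseteq> Y 1 \<subseteq> ... \<subseteq> Y n: the dimension of the classes of H_q(Y n) born at i and alive
  at n, i.e. of im rho_{i,n} / im rho_{i-1,n}.\<close>

definition bar_infty_mult :: "'f::field itself \<Rightarrow> nat \<Rightarrow> 'a topology \<Rightarrow> (nat \<Rightarrow> 'a set) \<Rightarrow> nat \<Rightarrow> nat \<Rightarrow> nat"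
  where "bar_infty_mult F q X Y n i =
     dim_quot (fscale :: 'f \<Rightarrow> _)
       (fimage_cycles F q X (Y i) (Y n))
       (fimage_cycles F q X (Y (i - 1)) (Y n))"

text \<open>Gamma = {(s1,s2) \<in> H_q(X1) \<oplus> H_q(X2). rho_1 s1 = rho_2 s2}, represented as the pairs of
  cycles (z1,z2) with z1 - z2 a boundary in X, modulo B_q(X1) \<times> B_q(X2).\<close>

definition gamma_dim :: "'f::field itself \<Rightarrow> nat \<Rightarrow> 'a topology \<Rightarrow> 'a set \<Rightarrow> 'a set \<Rightarrow> nat"
  where "gamma_dim F q X X1 X2 =
     dim_quot (pscale :: 'f \<Rightarrow> _)
       {(z1, z2). z1 \<in> fcycles q (subtopology X X1) \<and> z2 \<in> fcycles q (subtopology X X2)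
                  \<and> z1 - z2 \<in> fboundaries q X}
       (fboundaries q (subtopology X X1) \<times> fboundaries q (subtopology X X2))"

end

theory Submission
  imports Defs
begin

text \<open>Write \<open>Z(Y)\<close>, \<open>B(Y)\<close> for the \<open>q\<close>-cycles and \<open>q\<close>-boundaries of \<open>Y\<close>, and
  \<open>I = Z(X\<^sub>1 \<union> X\<^sub>2) + B(X)\<close>, so that \<open>I/B(X)\<close> is the image of \<open>H\<^sub>q(X\<^sub>1 \<union> X\<^sub>2)\<close> in
  \<open>H\<^sub>q(X)\<close>. The bars \<open>(3,+\<infinity>)\<close> are counted by \<open>dim Z(X)/I\<close>, and
  \<open>dim H\<^sub>q(X) = dim I/B(X) + dim Z(X)/I\<close>.
  Since \<open>X\<^sub>1\<close> and \<open>X\<^sub>2\<close> are separated, every singular simplex of \<open>X\<^sub>1 \<union> X\<^sub>2\<close> lies in one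
  of them, so \<open>Z(X\<^sub>1 \<union> X\<^sub>2) = Z(X\<^sub>1) + Z(X\<^sub>2)\<close>. Hence \<open>(z\<^sub>1, z\<^sub>2) \<mapsto> z\<^sub>1 - z\<^sub>2\<close> maps
  \<open>Z(X\<^sub>1) \<times> Z(X\<^sub>2)\<close> onto \<open>I\<close> modulo \<open>B(X)\<close>, with preimage of \<open>B(X)\<close> the pairs
  representing \<open>\<Gamma>\<close>; rank-nullity gives \<open>dim H\<^sub>q(X\<^sub>1) + dim H\<^sub>q(X\<^sub>2) = dim \<Gamma> + dim I/B(X)\<close>.
  As the chain spaces are infinite-dimensional, every dimension is that of a quotient
  \<open>U/W\<close>, computed as the size of a finite basis of \<open>U\<close> modulo \<open>W\<close>.\<close>

section \<open>Dimensions of quotient spaces\<close>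

definition independent_mod :: "('f::field \<Rightarrow> 'v::ab_group_add \<Rightarrow> 'v) \<Rightarrow> 'v set \<Rightarrow> 'v set \<Rightarrow> bool"
  where "independent_mod s S W \<longleftrightarrow> \<not> module.dependent s S \<and> module.span s S \<inter> W \<subseteq> {0}"

definition basis_mod :: "('f::field \<Rightarrow> 'v::ab_group_add \<Rightarrow> 'v) \<Rightarrow> 'v set \<Rightarrow> 'v set \<Rightarrow> 'v set \<Rightarrow> bool"
  where "basis_mod s B U W \<longleftrightarrow>
    finite B \<and> B \<subseteq> U \<and> independent_mod s B W \<and> U \<subseteq> module.span s (B \<union> W)"

context vector_space
begin

lemma independent_Un_of_span_Int_zero:
  assumes "independent A" "independent C" "span A \<inter> span C \<subseteq> {0}"
  shows "independent (A \<union> C)"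
proof
  assume "dependent (A \<union> C)"
  then obtain T u v where T: "finite T" "T \<subseteq> A \<union> C" "(\<Sum>x\<in>T. scale (u x) x) = 0" "v \<in> T" "u v \<noteq> 0"
    unfolding dependent_explicit by blast
  define a where "a = (\<Sum>x\<in>T \<inter> A. scale (u x) x)"
  define c where "c = (\<Sum>x\<in>T - A. scale (u x) x)"
  have "a + c = 0"
    unfolding a_def c_def using T(3) sum.Int_Diff[OF T(1), of "\<lambda>x. scale (u x) x" A] by simp
  moreover have "a \<in> span A" unfolding a_def by (intro span_sum span_scale span_base) auto
  moreover have "c \<in> span C" unfolding c_def using T(2) by (intro span_sum span_scale span_base) auto
  ultimately have "a = 0" "c = 0"
    using assms(3) span_neg[of c C] by (auto simp: add_eq_0_iff2)
  then show False
    using independentD[OF assms(1), of "T \<inter> A" u v] independentD[OF assms(2), of "T - A" u v] T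
    by (cases "v \<in> A") (auto simp: a_def c_def)
qed

lemma span_Int_zero_of_independent_Un:
  assumes "independent (A \<union> C)" "A \<inter> C = {}"
  shows "span A \<inter> span C \<subseteq> {0}"
proof
  fix x assume "x \<in> span A \<inter> span C"
  then obtain ta ra tc rc where a: "finite ta" "ta \<subseteq> A" "x = (\<Sum>v\<in>ta. scale (ra v) v)"
    and c: "finite tc" "tc \<subseteq> C" "x = (\<Sum>v\<in>tc. scale (rc v) v)"
    unfolding span_explicit by blast
  define u where "u v = (if v \<in> ta then ra v else - rc v)" for v
  have disj: "ta \<inter> tc = {}" using a c assms(2) by blast
  have "(\<Sum>v\<in>tc. scale (u v) v) = (\<Sum>v\<in>tc. - scale (rc v) v)"
    using disj by (intro sum.cong) (auto simp: u_def)
  then have "(\<Sum>v\<in>ta \<union> tc. scale (u v) v) = (\<Sum>v\<in>ta. scale (ra v) v) - (\<Sum>v\<in>tc. scale (rc v) v)"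
    using a c disj by (simp add: sum.union_disjoint u_def sum_negf)
  also have "\<dots> = 0" using a c by simp
  finally have "\<forall>v\<in>ta. u v = 0" using independentD[OF assms(1)] a c by blast
  then show "x \<in> {0}" using a by (simp add: u_def)
qed

lemma independent_mod_card_le_finite:
  assumes W: "subspace W" and T: "finite T" and S: "finite S" "independent_mod scale S W"
    and ST: "S \<subseteq> span (T \<union> W)"
  shows "card S \<le> card T"
proof -
  obtain C where C: "C \<subseteq> W" "independent C" "W \<subseteq> span C"
    using maximal_independent_subset[of W] by blast
  have "T \<union> W \<subseteq> span (T \<union> C)" using C(3) span_mono[of C "T \<union> C"] by (auto intro: span_base)
  then have SC: "S \<subseteq> span (T \<union> C)" using ST span_minimal[OF _ subspace_span] by blast
  have "\<exists>C'. finite C' \<and> C' \<subseteq> T \<union> C \<and> s \<in> span C'" if "s \<in> S" for s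
  proof -
    have "s \<in> span (T \<union> C)" using that SC by blast
    then obtain t r where "finite t" "t \<subseteq> T \<union> C" "s = (\<Sum>a\<in>t. scale (r a) a)"
      unfolding span_explicit by blast
    moreover have "(\<Sum>a\<in>t. scale (r a) a) \<in> span t" by (intro span_sum span_scale span_base)
    ultimately show ?thesis by blast
  qed
  then obtain g where g: "\<And>s. s \<in> S \<Longrightarrow> finite (g s) \<and> g s \<subseteq> T \<union> C \<and> s \<in> span (g s)"
    by metis
  \<comment> \<open>Only finitely many vectors of the (possibly infinite) basis \<open>C\<close> of \<open>W\<close> are needed.\<close>
  define C0 where "C0 = \<Union>(g ` S) \<inter> C"
  have C0: "finite C0" "C0 \<subseteq> C" using g S(1) by (auto simp: C0_def)
  have SC0: "S \<subseteq> span (T \<union> C0)"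
  proof
    fix s assume "s \<in> S"
    with g have "g s \<subseteq> T \<union> C0" "s \<in> span (g s)" by (auto simp: C0_def)
    then show "s \<in> span (T \<union> C0)" using span_mono by blast
  qed
  have "span C0 \<subseteq> W" using C0(2) C(1) W by (meson span_minimal order_trans)
  then have "span S \<inter> span C0 \<subseteq> {0}" using S(2) by (auto simp: independent_mod_def)
  then have indep: "independent (S \<union> C0)"
    using S(2) independent_Un_of_span_Int_zero independent_mono[OF C(2) C0(2)]
    by (simp add: independent_mod_def)
  have "S \<inter> C0 \<subseteq> span S \<inter> W" using C0(2) C(1) by (auto intro: span_base)
  moreover have "0 \<notin> S" using S(2) dependent_zero by (auto simp: independent_mod_def)
  ultimately have disj: "S \<inter> C0 = {}" using S(2) by (auto simp: independent_mod_def)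
  have "card S + card C0 = card (S \<union> C0)" using card_Un_disjoint[OF S(1) C0(1) disj] ..
  also have "\<dots> \<le> card (T \<union> C0)"
    using independent_span_bound[OF _ indep] T C0(1) SC0 by (auto intro: span_base)
  also have "\<dots> \<le> card T + card C0" by (rule card_Un_le)
  finally show ?thesis by simp
qed

lemma independent_mod_card_le:
  assumes W: "subspace W" and T: "finite T" and S: "independent_mod scale S W"
    and ST: "S \<subseteq> span (T \<union> W)"
  shows "finite S \<and> card S \<le> card T"
proof -
  have bound: "card S' \<le> card T" if "S' \<subseteq> S" "finite S'" for S'
  proof (rule independent_mod_card_le_finite[OF W T that(2)])
    show "independent_mod scale S' W"
      using S span_mono[OF that(1)] independent_mono[OF _ that(1)] by (auto simp: independent_mod_def)
    show "S' \<subseteq> span (T \<union> W)" using ST that(1) by blast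
  qed
  have "finite S"
  proof (rule ccontr)
    assume "infinite S"
    then obtain S' where S': "finite S'" "card S' = Suc (card T)" "S' \<subseteq> S"
      using infinite_arbitrarily_large by metis
    show False using bound[OF S'(3,1)] S'(2) by linarith
  qed
  then show ?thesis using bound[OF subset_refl] by blast
qed

lemma independent_mod_extend_basis_mod:
  assumes W: "subspace W" and N: "subspace N" "W \<subseteq> N"
    and T: "finite T" "N \<subseteq> span (T \<union> W)"
    and A: "A \<subseteq> N" "independent_mod scale A W"
  obtains B where "A \<subseteq> B" "basis_mod scale B N W"
proof -
  obtain C where C: "C \<subseteq> W" "independent C" "W \<subseteq> span C"
    using maximal_independent_subset[of W] by blast
  have spanC: "span C = W" using C W by (metis span_subspace)
  then have "independent (A \<union> C)"
    using independent_Un_of_span_Int_zero[of A C] A(2) C(2) by (simp add: independent_mod_def)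
  then obtain B' where B': "A \<union> C \<subseteq> B'" "B' \<subseteq> N" "independent B'" "N \<subseteq> span B'"
    using maximal_independent_subset_extend[of "A \<union> C" N] A(1) C(1) N(2) by blast
  define B where "B = B' - C"
  have "A \<inter> C \<subseteq> span A \<inter> W" using C(1) by (auto intro: span_base)
  moreover have "0 \<notin> A" using A(2) dependent_zero by (auto simp: independent_mod_def)
  ultimately have "A \<inter> C = {}" using A(2) by (auto simp: independent_mod_def)
  then have AB: "A \<subseteq> B" using B'(1) by (auto simp: B_def)
  have "independent B" using independent_mono[OF B'(3)] by (auto simp: B_def)
  moreover have "span B \<inter> W \<subseteq> {0}"
  proof -
    have "B \<union> C = B'" "B \<inter> C = {}" using B'(1) by (auto simp: B_def)
    then show ?thesis using span_Int_zero_of_independent_Un[of B C] B'(3) spanC by simp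
  qed
  ultimately have indB: "independent_mod scale B W" by (simp add: independent_mod_def)
  have BN: "B \<subseteq> N" using B'(2) by (auto simp: B_def)
  have "N \<subseteq> span (B \<union> W)"
    using B'(4) C(1) span_mono[of B' "B \<union> W"] by (auto simp: B_def)
  moreover have "finite B" using independent_mod_card_le[OF W T(1) indB] BN T(2) by blast
  ultimately show ?thesis using that AB BN indB by (simp add: basis_mod_def)
qed

lemma basis_mod_exists:
  assumes "subspace W" "subspace N" "W \<subseteq> N" "N \<subseteq> U" "fin_dim_quot scale U W"
  obtains B where "basis_mod scale B N W"
proof -
  obtain T where T: "finite T" "U \<subseteq> span (T \<union> W)"
    using assms(5) unfolding fin_dim_quot_def by blast
  have "N \<subseteq> span (T \<union> W)" using T(2) assms(4) by blast
  moreover have "independent_mod scale {} W" by (simp add: independent_mod_def independent_empty)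
  ultimately obtain B where "basis_mod scale B N W"
    using independent_mod_extend_basis_mod[OF assms(1-3) T(1) _ empty_subsetI] by metis
  then show ?thesis by (rule that)
qed

lemma fin_dim_quot_basis_mod: "basis_mod scale B U W \<Longrightarrow> fin_dim_quot scale U W"
  unfolding basis_mod_def fin_dim_quot_def by blast

lemma dim_quot_basis_mod:
  assumes W: "subspace W" and B: "basis_mod scale B U W"
  shows "dim_quot scale U W = card B"
  unfolding dim_quot_def
proof (rule Least_equality)
  show "\<exists>B'. finite B' \<and> card B' = card B \<and> B' \<subseteq> U \<and> U \<subseteq> span (B' \<union> W)"
    using B by (auto simp: basis_mod_def)
next
  fix n assume "\<exists>B'. finite B' \<and> card B' = n \<and> B' \<subseteq> U \<and> U \<subseteq> span (B' \<union> W)"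
  then show "card B \<le> n"
    using independent_mod_card_le[OF W] B by (force simp: basis_mod_def)
qed

lemma fin_dim_quot_mono:
  assumes "W \<subseteq> W'" "fin_dim_quot scale U W"
  shows "fin_dim_quot scale U W'"
proof -
  obtain B where "finite B" "B \<subseteq> U" "U \<subseteq> span (B \<union> W)"
    using assms(2) unfolding fin_dim_quot_def by blast
  moreover have "span (B \<union> W) \<subseteq> span (B \<union> W')" using assms(1) by (intro span_mono) blast
  ultimately show ?thesis unfolding fin_dim_quot_def by blast
qed

lemma fin_dim_quot_subspace:
  assumes "subspace W" "subspace N" "W \<subseteq> N" "N \<subseteq> U" "fin_dim_quot scale U W"
  shows "fin_dim_quot scale N W"
  using basis_mod_exists[OF assms] fin_dim_quot_basis_mod by blast

lemma basis_mod_Diff: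
  assumes W: "subspace W" and "W \<subseteq> N"
    and A: "basis_mod scale A N W" and B: "basis_mod scale B U W" and "A \<subseteq> B"
  shows "basis_mod scale (B - A) U N"
proof -
  have "independent B" "span B \<inter> W \<subseteq> {0}"
    using B by (auto simp: basis_mod_def independent_mod_def)
  have "span (B - A) \<inter> N \<subseteq> {0}"
  proof
    fix d assume d: "d \<in> span (B - A) \<inter> N"
    then have "d \<in> span (A \<union> W)" using A by (auto simp: basis_mod_def)
    then obtain a w where aw: "a \<in> span A" "w \<in> W" "d = a + w"
      unfolding span_Un span_eq_iff[THEN iffD2, OF W] by blast
    \<comment> \<open>\<open>w = d - a\<close> lies in \<open>span B \<inter> W\<close>, so \<open>d = a\<close> lies in both \<open>span (B - A)\<close> and \<open>span A\<close>.\<close>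
    have "span (B - A) \<subseteq> span B" "span A \<subseteq> span B"
      using \<open>A \<subseteq> B\<close> by (simp_all add: Diff_subset span_mono)
    then have "w \<in> span B" using d aw span_diff[of d B a] by auto
    then have "w = 0" using aw(2) \<open>span B \<inter> W \<subseteq> {0}\<close> by blast
    moreover have "span (B - A) \<inter> span A \<subseteq> {0}"
    proof (rule span_Int_zero_of_independent_Un)
      show "independent (B - A \<union> A)" using \<open>independent B\<close> \<open>A \<subseteq> B\<close> by (simp add: Un_absorb2)
    qed blast
    ultimately show "d \<in> {0}" using d aw by auto
  qed
  moreover have "B \<union> W \<subseteq> (B - A) \<union> N" using A \<open>W \<subseteq> N\<close> by (auto simp: basis_mod_def)
  then have "U \<subseteq> span ((B - A) \<union> N)"
    using B span_mono[of "B \<union> W" "(B - A) \<union> N"] unfolding basis_mod_def by blast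
  ultimately show ?thesis
    using B independent_mono[of B "B - A"] by (auto simp: basis_mod_def independent_mod_def)
qed

lemma dim_quot_add:
  assumes W: "subspace W" and N: "subspace N" and U: "subspace U"
    and "W \<subseteq> N" "N \<subseteq> U" and fin: "fin_dim_quot scale U W"
  shows "dim_quot scale U W = dim_quot scale N W + dim_quot scale U N"
proof -
  obtain A where A: "basis_mod scale A N W"
    using basis_mod_exists[OF W N \<open>W \<subseteq> N\<close> \<open>N \<subseteq> U\<close> fin] .
  obtain T where T: "finite T" "U \<subseteq> span (T \<union> W)" using fin unfolding fin_dim_quot_def by blast
  have "W \<subseteq> U" "A \<subseteq> U" "independent_mod scale A W"
    using A \<open>W \<subseteq> N\<close> \<open>N \<subseteq> U\<close> by (auto simp: basis_mod_def)
  then obtain B where B: "A \<subseteq> B" "basis_mod scale B U W"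
    using independent_mod_extend_basis_mod[OF W U _ T] by blast
  have "finite B" using B(2) by (simp add: basis_mod_def)
  then have "card B = card A + card (B - A)"
    using card_Diff_subset[OF finite_subset[OF B(1)] B(1)] card_mono[OF _ B(1)] by simp
  moreover have "basis_mod scale (B - A) U N" by (rule basis_mod_Diff[OF W \<open>W \<subseteq> N\<close> A B(2,1)])
  ultimately show ?thesis
    using dim_quot_basis_mod[OF W B(2)] dim_quot_basis_mod[OF W A] dim_quot_basis_mod[OF N] by simp
qed

end

context vector_space_pair
begin

lemma subspace_linear_preimage_Int:
  assumes "Vector_Spaces.linear s1 s2 f" "vs1.subspace U" "vs2.subspace W'"
  shows "vs1.subspace {u \<in> U. f u \<in> W'}"
  using vs1.subspace_inter[OF assms(2) linear_subspace_linear_preimage[OF assms(1,3)]]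
  by (simp add: Collect_conj_eq)

lemma basis_mod_image:
  assumes f: "Vector_Spaces.linear s1 s2 f" and U: "vs1.subspace U" and W': "vs2.subspace W'"
    and D: "basis_mod s1 D U {u \<in> U. f u \<in> W'}"
  shows "inj_on f D" "basis_mod s2 (f ` D) (vs2.span (f ` U \<union> W')) W'"
proof -
  have DU: "D \<subseteq> U" "U \<subseteq> vs1.span (D \<union> {u \<in> U. f u \<in> W'})" and "vs1.independent D"
    using D by (auto simp: basis_mod_def independent_mod_def)
  have ker: "d = 0" if "d \<in> vs1.span D" "f d \<in> W'" for d
  proof -
    have "d \<in> U" using that(1) DU(1) vs1.span_minimal[OF _ U] by blast
    then show ?thesis using that D by (auto simp: basis_mod_def independent_mod_def)
  qed
  have inj: "inj_on f (vs1.span D)"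
    unfolding linear_inj_on_iff_eq_0[OF f vs1.subspace_span] using ker vs2.subspace_0[OF W'] by auto
  then show "inj_on f D" using inj_on_subset vs1.span_superset by blast
  have "vs2.independent (f ` D)"
    using linear_independent_injective_image[OF f \<open>vs1.independent D\<close> inj] .
  moreover have "vs2.span (f ` D) \<inter> W' \<subseteq> {0}"
    using ker linear_0[OF f] by (auto simp: linear_span_image[OF f])
  moreover have "f ` U \<union> W' \<subseteq> vs2.span (f ` D \<union> W')"
  proof (intro Un_least subsetI)
    fix y assume "y \<in> f ` U"
    then obtain u where "u \<in> U" "y = f u" by blast
    then obtain d n where dn: "d \<in> vs1.span D" "n \<in> vs1.span {u \<in> U. f u \<in> W'}" "y = f d + f n"
      using DU(2) linear_add[OF f] unfolding vs1.span_Un by blast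
    have "f n \<in> W'"
      using dn(2) vs1.span_eq_iff[THEN iffD2, OF subspace_linear_preimage_Int[OF f U W']] by simp
    moreover have "f d \<in> vs2.span (f ` D)" using dn(1) by (simp add: linear_span_image[OF f])
    ultimately show "y \<in> vs2.span (f ` D \<union> W')"
      using dn(3) vs2.span_add vs2.span_mono[of "f ` D" "f ` D \<union> W'"] vs2.span_base[of "f n"]
      by blast
  qed (simp add: vs2.span_base)
  then have "vs2.span (f ` U \<union> W') \<subseteq> vs2.span (f ` D \<union> W')"
    by (rule vs2.span_minimal) simp
  moreover have "f ` D \<subseteq> vs2.span (f ` U \<union> W')"
    using DU(1) vs2.span_superset[of "f ` U \<union> W'"] by blast
  moreover have "finite (f ` D)" using D by (simp add: basis_mod_def)
  ultimately show "basis_mod s2 (f ` D) (vs2.span (f ` U \<union> W')) W'"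
    unfolding basis_mod_def independent_mod_def by blast
qed

lemma dim_quot_image:
  assumes f: "Vector_Spaces.linear s1 s2 f" and U: "vs1.subspace U" and W': "vs2.subspace W'"
    and fin: "fin_dim_quot s1 U {u \<in> U. f u \<in> W'}"
  shows "dim_quot s1 U {u \<in> U. f u \<in> W'} = dim_quot s2 (vs2.span (f ` U \<union> W')) W'"
proof -
  have N: "vs1.subspace {u \<in> U. f u \<in> W'}" by (rule subspace_linear_preimage_Int[OF f U W'])
  obtain D where D: "basis_mod s1 D U {u \<in> U. f u \<in> W'}"
    using vs1.basis_mod_exists[OF N U _ order_refl fin] by blast
  show ?thesis
    using vs1.dim_quot_basis_mod[OF N D] vs2.dim_quot_basis_mod[OF W' basis_mod_image(2)[OF f U W' D]]
      card_image[OF basis_mod_image(1)[OF f U W' D]] by simp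
qed

lemma dim_quot_rank_nullity:
  assumes f: "Vector_Spaces.linear s1 s2 f" and U: "vs1.subspace U" and W: "vs1.subspace W" "W \<subseteq> U"
    and W': "vs2.subspace W'" "f ` W \<subseteq> W'" and fin: "fin_dim_quot s1 U W"
  shows "dim_quot s1 U W = dim_quot s1 {u \<in> U. f u \<in> W'} W + dim_quot s2 (vs2.span (f ` U \<union> W')) W'"
proof -
  have N: "vs1.subspace {u \<in> U. f u \<in> W'}" by (rule subspace_linear_preimage_Int[OF f U W'(1)])
  have "W \<subseteq> {u \<in> U. f u \<in> W'}" using W W' by auto
  then show ?thesis
    using vs1.dim_quot_add[OF W(1) N U _ _ fin] dim_quot_image[OF f U W'(1)]
      vs1.fin_dim_quot_mono[OF _ fin]
    by auto
qed

end

section \<open>Products of vector spaces\<close>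

definition scale_prod :: "('f \<Rightarrow> 'a \<Rightarrow> 'a) \<Rightarrow> ('f \<Rightarrow> 'b \<Rightarrow> 'b) \<Rightarrow> 'f \<Rightarrow> 'a \<times> 'b \<Rightarrow> 'a \<times> 'b"
  where "scale_prod s1 s2 r v = (s1 r (fst v), s2 r (snd v))"

locale vector_space_prod = vs1: vector_space s1 + vs2: vector_space s2
  for s1 :: "'f::field \<Rightarrow> 'a::ab_group_add \<Rightarrow> 'a" and s2 :: "'f \<Rightarrow> 'b::ab_group_add \<Rightarrow> 'b"
begin

sublocale vsp: vector_space "scale_prod s1 s2"
  by unfold_locales
    (simp_all add: scale_prod_def vs1.scale_right_distrib vs2.scale_right_distrib
      vs1.scale_left_distrib vs2.scale_left_distrib)

sublocale fst_pair: vector_space_pair "scale_prod s1 s2" s1 ..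
sublocale snd_pair: vector_space_pair "scale_prod s1 s2" s2 ..
sublocale inl_pair: vector_space_pair s1 "scale_prod s1 s2" ..
sublocale inr_pair: vector_space_pair s2 "scale_prod s1 s2" ..

lemma subspace_Times:
  assumes "vs1.subspace A" "vs2.subspace B"
  shows "vsp.subspace (A \<times> B)"
  using assms unfolding vs1.subspace_def vs2.subspace_def vsp.subspace_def
  by (auto simp: scale_prod_def zero_prod_def)

lemma linear_fst: "Vector_Spaces.linear (scale_prod s1 s2) s1 fst"
  by unfold_locales (simp_all add: scale_prod_def)

lemma linear_snd: "Vector_Spaces.linear (scale_prod s1 s2) s2 snd"
  by unfold_locales (simp_all add: scale_prod_def)

lemma linear_Pair_zero: "Vector_Spaces.linear s1 (scale_prod s1 s2) (\<lambda>x. (x, 0))"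
  by unfold_locales (simp_all add: scale_prod_def)

lemma linear_zero_Pair: "Vector_Spaces.linear s2 (scale_prod s1 s2) (\<lambda>y. (0, y))"
  by unfold_locales (simp_all add: scale_prod_def)

lemma fin_dim_quot_Times:
  assumes "vs1.subspace W1" "vs2.subspace W2" "vs1.subspace U1" "vs2.subspace U2"
    and fin1: "fin_dim_quot s1 U1 W1" and fin2: "fin_dim_quot s2 U2 W2"
  shows "fin_dim_quot (scale_prod s1 s2) (U1 \<times> U2) (W1 \<times> W2)"
proof -
  have zero: "0 \<in> W1" "0 \<in> W2" "0 \<in> U1" "0 \<in> U2"
    using assms(1-4) by (simp_all add: vs1.subspace_0 vs2.subspace_0)
  obtain T1 where T1: "finite T1" "T1 \<subseteq> U1" "U1 \<subseteq> vs1.span (T1 \<union> W1)"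
    using fin1 unfolding fin_dim_quot_def by blast
  obtain T2 where T2: "finite T2" "T2 \<subseteq> U2" "U2 \<subseteq> vs2.span (T2 \<union> W2)"
    using fin2 unfolding fin_dim_quot_def by blast
  define T where "T = (\<lambda>x. (x, 0)) ` T1 \<union> (\<lambda>y. (0, y)) ` T2"
  have inl: "(z1, 0) \<in> vsp.span (T \<union> W1 \<times> W2)" if "z1 \<in> U1" for z1
  proof -
    have "(z1, 0) \<in> (\<lambda>x. (x, 0)) ` vs1.span (T1 \<union> W1)" using that T1(3) by blast
    also have "\<dots> = vsp.span ((\<lambda>x. (x, 0)) ` (T1 \<union> W1))"
      by (rule inl_pair.linear_span_image[OF linear_Pair_zero, symmetric])
    also have "\<dots> \<subseteq> vsp.span (T \<union> W1 \<times> W2)"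
      by (rule vsp.span_mono) (use zero in \<open>auto simp: T_def\<close>)
    finally show ?thesis .
  qed
  have inr: "(0, z2) \<in> vsp.span (T \<union> W1 \<times> W2)" if "z2 \<in> U2" for z2
  proof -
    have "(0, z2) \<in> (\<lambda>y. (0, y)) ` vs2.span (T2 \<union> W2)" using that T2(3) by blast
    also have "\<dots> = vsp.span ((\<lambda>y. (0, y)) ` (T2 \<union> W2))"
      by (rule inr_pair.linear_span_image[OF linear_zero_Pair, symmetric])
    also have "\<dots> \<subseteq> vsp.span (T \<union> W1 \<times> W2)"
      by (rule vsp.span_mono) (use zero in \<open>auto simp: T_def\<close>)
    finally show ?thesis .
  qed
  have "U1 \<times> U2 \<subseteq> vsp.span (T \<union> W1 \<times> W2)"
  proof (clarify)
    fix z1 z2 assume "z1 \<in> U1" "z2 \<in> U2"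
    then show "(z1, z2) \<in> vsp.span (T \<union> W1 \<times> W2)"
      using vsp.span_add[OF inl inr] by simp
  qed
  moreover have "finite T" "T \<subseteq> U1 \<times> U2" using T1 T2 zero by (auto simp: T_def)
  ultimately show ?thesis unfolding fin_dim_quot_def by blast
qed

lemma dim_quot_Times:
  assumes W1: "vs1.subspace W1" "W1 \<subseteq> U1" and W2: "vs2.subspace W2" "W2 \<subseteq> U2"
    and U1: "vs1.subspace U1" and U2: "vs2.subspace U2"
    and fin1: "fin_dim_quot s1 U1 W1" and fin2: "fin_dim_quot s2 U2 W2"
  shows "dim_quot (scale_prod s1 s2) (U1 \<times> U2) (W1 \<times> W2) = dim_quot s1 U1 W1 + dim_quot s2 U2 W2"
proof -
  have zero: "0 \<in> W1" "0 \<in> W2" using W1 W2 by (simp_all add: vs1.subspace_0 vs2.subspace_0)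
  have fin: "fin_dim_quot (scale_prod s1 s2) (U1 \<times> U2) (W1 \<times> W2)"
    by (rule fin_dim_quot_Times[OF W1(1) W2(1) U1 U2 fin1 fin2])
  have WU: "W1 \<times> W2 \<subseteq> U1 \<times> U2" "W1 \<times> W2 \<subseteq> W1 \<times> U2" "W1 \<times> U2 \<subseteq> U1 \<times> U2"
    using W1(2) W2(2) by auto
  have N1: "{u \<in> U1 \<times> U2. fst u \<in> W1} = W1 \<times> U2" using W1(2) by auto
  have "fst ` (U1 \<times> U2) \<union> W1 = U1" using W1(2) zero W2(2) by force
  then have I1: "vs1.span (fst ` (U1 \<times> U2) \<union> W1) = U1" using vs1.span_eq_iff U1 by simp
  have N2: "{u \<in> W1 \<times> U2. snd u \<in> W2} = W1 \<times> W2" using W2(2) by auto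
  have "snd ` (W1 \<times> U2) \<union> W2 = U2" using W2(2) zero by force
  then have I2: "vs2.span (snd ` (W1 \<times> U2) \<union> W2) = U2" using vs2.span_eq_iff U2 by simp
  have fin': "fin_dim_quot (scale_prod s1 s2) (W1 \<times> U2) (W1 \<times> W2)"
    by (rule vsp.fin_dim_quot_subspace[OF subspace_Times[OF W1(1) W2(1)] subspace_Times[OF W1(1) U2]
        WU(2,3) fin])
  have "dim_quot (scale_prod s1 s2) (U1 \<times> U2) (W1 \<times> W2) =
      dim_quot (scale_prod s1 s2) (W1 \<times> U2) (W1 \<times> W2) + dim_quot s1 U1 W1"
    using fst_pair.dim_quot_rank_nullity[OF linear_fst subspace_Times[OF U1 U2]
        subspace_Times[OF W1(1) W2(1)] WU(1) W1(1) _ fin]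
    unfolding N1 I1 by auto
  moreover have "dim_quot (scale_prod s1 s2) (W1 \<times> U2) (W1 \<times> W2) = dim_quot s2 U2 W2"
    using snd_pair.dim_quot_image[OF linear_snd subspace_Times[OF W1(1) U2] W2(1)] fin'
    unfolding N2 I2 by blast
  ultimately show ?thesis by simp
qed

end

section \<open>Chains with coefficients in a field\<close>

definition incidence :: "nat \<Rightarrow> ((nat \<Rightarrow> real) \<Rightarrow> 'a) \<Rightarrow> ((nat \<Rightarrow> real) \<Rightarrow> 'a) \<Rightarrow> 'f::field"
  where "incidence p \<sigma> \<tau> = (\<Sum>k\<le>p. if singular_face p k \<sigma> = \<tau> then (-1) ^ k else 0)"

lemma incidence_nonzero_imp_face:
  assumes "incidence p \<sigma> \<tau> \<noteq> (0::'f::field)"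
  obtains k where "k \<le> p" "singular_face p k \<sigma> = \<tau>"
proof -
  obtain k where "k \<in> {..p}" "(if singular_face p k \<sigma> = \<tau> then (-1) ^ k else (0::'f)) \<noteq> 0"
    using assms unfolding incidence_def by (rule sum.not_neutral_contains_not_neutral)
  then show ?thesis using that by (auto split: if_splits)
qed

lemma incidence_boundary_boundary:
  assumes "singular_simplex (Suc p) X \<sigma>" "p \<noteq> 0"
  shows "(\<Sum>k\<le>Suc p. (-1) ^ k * incidence p (singular_face (Suc p) k \<sigma>) \<rho>) = (0::'f::field)"
proof -
  \<comment> \<open>read off the coefficient of \<open>\<rho>\<close> in the library's \<open>\<partial>\<partial>\<sigma> = 0\<close> for integral chains\<close>
  have "chain_boundary p (chain_boundary (Suc p) (frag_of \<sigma>)) = 0"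
    using chain_boundary_boundary[of "Suc p" X "frag_of \<sigma>"] assms by (simp add: singular_chain_of)
  then have "Poly_Mapping.lookup (chain_boundary p (chain_boundary (Suc p) (frag_of \<sigma>))) \<rho> = 0"
    by simp
  then have int: "(\<Sum>k\<le>Suc p. (-1) ^ k * (\<Sum>j\<le>p. (-1) ^ j *
      (if \<rho> = singular_face p j (singular_face (Suc p) k \<sigma>) then 1 else 0))) = (0::int)"
    using assms(2)
    by (simp add: chain_boundary_of chain_boundary_sum chain_boundary_cmul lookup_sum o_def
        del: sum.atMost_Suc)
  have "(\<Sum>k\<le>Suc p. (-1) ^ k * incidence p (singular_face (Suc p) k \<sigma>) \<rho>) =
     (of_int (\<Sum>k\<le>Suc p. (-1) ^ k * (\<Sum>j\<le>p. (-1) ^ j *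
        (if \<rho> = singular_face p j (singular_face (Suc p) k \<sigma>) then 1 else 0))) :: 'f)"
    unfolding incidence_def by (auto simp del: sum.atMost_Suc intro!: sum.cong)
  also have "\<dots> = 0" by (simp only: int of_int_0)
  finally show ?thesis .
qed

lemma fchain_boundary_eq_sum:
  assumes "finite S" "{\<sigma>. c \<sigma> \<noteq> 0} \<subseteq> S"
  shows "fchain_boundary p c \<tau> = (if p = 0 then 0 else (\<Sum>\<sigma>\<in>S. c \<sigma> * incidence p \<sigma> \<tau>))"
  unfolding fchain_boundary_def incidence_def using assms by (auto intro!: sum.mono_neutral_left)

lemma fchain_boundary_support:
  assumes "finite {\<sigma>. c \<sigma> \<noteq> 0}"
  shows "{\<tau>. fchain_boundary p c \<tau> \<noteq> 0} \<subseteq>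
     (\<lambda>(\<sigma>, k). singular_face p k \<sigma>) ` ({\<sigma>. c \<sigma> \<noteq> (0::'f::field)} \<times> {..p})"
proof
  fix \<tau> assume "\<tau> \<in> {\<tau>. fchain_boundary p c \<tau> \<noteq> 0}"
  then have "(\<Sum>\<sigma>\<in>{\<sigma>. c \<sigma> \<noteq> 0}. c \<sigma> * incidence p \<sigma> \<tau>) \<noteq> 0"
    using fchain_boundary_eq_sum[OF assms order_refl] by (auto split: if_splits)
  then obtain \<sigma> where \<sigma>: "\<sigma> \<in> {\<sigma>. c \<sigma> \<noteq> 0}" "incidence p \<sigma> \<tau> \<noteq> (0::'f)"
    by (metis (no_types, lifting) mult_zero_right sum.not_neutral_contains_not_neutral)
  obtain k where "k \<le> p" "singular_face p k \<sigma> = \<tau>"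
    using incidence_nonzero_imp_face[OF \<sigma>(2)] by blast
  then show "\<tau> \<in> (\<lambda>(\<sigma>, k). singular_face p k \<sigma>) ` ({\<sigma>. c \<sigma> \<noteq> 0} \<times> {..p})"
    using \<sigma>(1) by (intro image_eqI[of _ _ "(\<sigma>, k)"]) auto
qed

lemma sum_incidence_incidence:
  assumes "singular_simplex (Suc p) Y \<sigma>" "p \<noteq> 0"
    and "finite F" "\<And>k. k \<le> Suc p \<Longrightarrow> singular_face (Suc p) k \<sigma> \<in> F"
  shows "(\<Sum>\<tau>\<in>F. incidence (Suc p) \<sigma> \<tau> * incidence p \<tau> \<rho>) = (0::'f::field)"
proof -
  have "(\<Sum>\<tau>\<in>F. incidence (Suc p) \<sigma> \<tau> * incidence p \<tau> \<rho> :: 'f) =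
      (\<Sum>\<tau>\<in>F. \<Sum>k\<le>Suc p. if singular_face (Suc p) k \<sigma> = \<tau> then (-1) ^ k * incidence p \<tau> \<rho> else 0)"
    unfolding incidence_def[of "Suc p"] sum_distrib_right by (intro sum.cong refl) simp
  also have "\<dots> = (\<Sum>k\<le>Suc p. \<Sum>\<tau>\<in>F.
      if singular_face (Suc p) k \<sigma> = \<tau> then (-1) ^ k * incidence p \<tau> \<rho> else 0)"
    by (rule sum.swap)
  also have "\<dots> = (\<Sum>k\<le>Suc p. (-1) ^ k * incidence p (singular_face (Suc p) k \<sigma>) \<rho>)"
    using assms(3,4) by (intro sum.cong refl) auto
  also have "\<dots> = 0" by (rule incidence_boundary_boundary[OF assms(1,2)])
  finally show ?thesis .
qed

lemma fchain_boundary_boundary: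
  assumes c: "fsingular_chain (Suc p) Y (c :: ('a,'f::field) fchain)"
  shows "fchain_boundary p (fchain_boundary (Suc p) c) = 0"
proof (cases "p = 0")
  case True
  then show ?thesis by (simp add: fchain_boundary_def)
next
  case False
  define S where "S = {\<sigma>. c \<sigma> \<noteq> 0}"
  define F where "F = (\<lambda>(\<sigma>, k). singular_face (Suc p) k \<sigma>) ` (S \<times> {..Suc p})"
  have S: "finite S" "\<And>\<sigma>. \<sigma> \<in> S \<Longrightarrow> singular_simplex (Suc p) Y \<sigma>"
    using c by (auto simp: fsingular_chain_def S_def)
  have F: "finite F" using S(1) by (simp add: F_def)
  have supp: "{\<tau>. fchain_boundary (Suc p) c \<tau> \<noteq> 0} \<subseteq> F"
    unfolding F_def S_def by (rule fchain_boundary_support) (use S(1) in \<open>simp add: S_def\<close>)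
  have dc: "fchain_boundary (Suc p) c \<tau> = (\<Sum>\<sigma>\<in>S. c \<sigma> * incidence (Suc p) \<sigma> \<tau>)" for \<tau>
    using fchain_boundary_eq_sum[OF S(1), of c] by (simp add: S_def)
  show ?thesis
  proof
    fix \<rho>
    have "fchain_boundary p (fchain_boundary (Suc p) c) \<rho> =
        (\<Sum>\<tau>\<in>F. fchain_boundary (Suc p) c \<tau> * incidence p \<tau> \<rho>)"
      using fchain_boundary_eq_sum[OF F supp, of p \<rho>] False by simp
    also have "\<dots> = (\<Sum>\<tau>\<in>F. \<Sum>\<sigma>\<in>S. c \<sigma> * (incidence (Suc p) \<sigma> \<tau> * incidence p \<tau> \<rho>))"
      by (simp add: dc sum_distrib_right mult.assoc)
    also have "\<dots> = (\<Sum>\<sigma>\<in>S. c \<sigma> * (\<Sum>\<tau>\<in>F. incidence (Suc p) \<sigma> \<tau> * incidence p \<tau> \<rho>))"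
      by (subst sum.swap) (simp add: sum_distrib_left)
    also have "\<dots> = 0"
    proof (rule sum.neutral, intro ballI)
      fix \<sigma> assume "\<sigma> \<in> S"
      then have "singular_face (Suc p) k \<sigma> \<in> F" if "k \<le> Suc p" for k
        using that by (force simp: F_def)
      then have "(\<Sum>\<tau>\<in>F. incidence (Suc p) \<sigma> \<tau> * incidence p \<tau> \<rho>) = (0::'f)"
        by (rule sum_incidence_incidence[OF S(2)[OF \<open>\<sigma> \<in> S\<close>] False F])
      then show "c \<sigma> * (\<Sum>\<tau>\<in>F. incidence (Suc p) \<sigma> \<tau> * incidence p \<tau> \<rho>) = 0"
        by simp
    qed
    finally show "fchain_boundary p (fchain_boundary (Suc p) c) \<rho> = 0 \<rho>" by simp
  qed
qed

lemma vector_space_fscale: "vector_space (fscale :: 'f::field \<Rightarrow> ('a,'f) fchain \<Rightarrow> ('a,'f) fchain)"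
  by unfold_locales (auto simp: fscale_def fun_eq_iff algebra_simps)

lemma fsingular_chain_finite: "fsingular_chain p Y c \<Longrightarrow> finite {\<sigma>. c \<sigma> \<noteq> 0}"
  by (simp add: fsingular_chain_def)

lemma fsingular_chain_0: "fsingular_chain p Y (0::('a,'f::field) fchain)"
  by (simp add: fsingular_chain_def)

lemma fsingular_chain_add:
  assumes "fsingular_chain p Y c" "fsingular_chain p Y (d::('a,'f::field) fchain)"
  shows "fsingular_chain p Y (c + d)"
proof -
  have "{\<sigma>. (c + d) \<sigma> \<noteq> 0} \<subseteq> {\<sigma>. c \<sigma> \<noteq> 0} \<union> {\<sigma>. d \<sigma> \<noteq> 0}" by auto
  then show ?thesis
    using assms unfolding fsingular_chain_def by (auto intro: finite_subset)
qed

lemma fsingular_chain_fscale: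
  assumes "fsingular_chain p Y (c::('a,'f::field) fchain)"
  shows "fsingular_chain p Y (fscale r c)"
proof -
  have "{\<sigma>. fscale r c \<sigma> \<noteq> 0} \<subseteq> {\<sigma>. c \<sigma> \<noteq> 0}" by (auto simp: fscale_def)
  then show ?thesis
    using assms unfolding fsingular_chain_def by (auto simp: fscale_def intro: finite_subset)
qed

lemma fsingular_chain_mono:
  assumes "fsingular_chain p (subtopology X S) c" "S \<subseteq> T"
  shows "fsingular_chain p (subtopology X T) c"
  using assms unfolding fsingular_chain_def by (meson singular_simplex_mono)

lemma fchain_boundary_0: "fchain_boundary p (0::('a,'f::field) fchain) = 0"
  by (simp add: fchain_boundary_def fun_eq_iff)

lemma fchain_boundary_add:
  assumes "finite {\<sigma>. c \<sigma> \<noteq> 0}" "finite {\<sigma>. d \<sigma> \<noteq> (0::'f::field)}"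
  shows "fchain_boundary p (c + d) = fchain_boundary p c + fchain_boundary p d"
proof
  fix \<tau>
  define S where "S = {\<sigma>. c \<sigma> \<noteq> 0} \<union> {\<sigma>. d \<sigma> \<noteq> 0}"
  have S: "finite S" using assms by (simp add: S_def)
  have "fchain_boundary p (c + d) \<tau> = (if p = 0 then 0 else \<Sum>\<sigma>\<in>S. (c + d) \<sigma> * incidence p \<sigma> \<tau>)"
    by (rule fchain_boundary_eq_sum[OF S]) (auto simp: S_def)
  moreover have "fchain_boundary p c \<tau> = (if p = 0 then 0 else \<Sum>\<sigma>\<in>S. c \<sigma> * incidence p \<sigma> \<tau>)"
    by (rule fchain_boundary_eq_sum[OF S]) (auto simp: S_def)
  moreover have "fchain_boundary p d \<tau> = (if p = 0 then 0 else \<Sum>\<sigma>\<in>S. d \<sigma> * incidence p \<sigma> \<tau>)"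
    by (rule fchain_boundary_eq_sum[OF S]) (auto simp: S_def)
  ultimately show "fchain_boundary p (c + d) \<tau> = (fchain_boundary p c + fchain_boundary p d) \<tau>"
    by (simp add: sum.distrib distrib_right)
qed

lemma fchain_boundary_fscale:
  assumes "finite {\<sigma>. c \<sigma> \<noteq> (0::'f::field)}"
  shows "fchain_boundary p (fscale r c) = fscale r (fchain_boundary p c)"
proof
  fix \<tau>
  have "{\<sigma>. fscale r c \<sigma> \<noteq> 0} \<subseteq> {\<sigma>. c \<sigma> \<noteq> 0}" by (auto simp: fscale_def)
  then show "fchain_boundary p (fscale r c) \<tau> = fscale r (fchain_boundary p c) \<tau>"
    using fchain_boundary_eq_sum[OF assms, of "fscale r c"] fchain_boundary_eq_sum[OF assms, of c]
    by (simp add: fscale_def sum_distrib_left mult.assoc)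
qed

lemma fsingular_chain_boundary:
  assumes c: "fsingular_chain (Suc p) Y (c::('a,'f::field) fchain)"
  shows "fsingular_chain p Y (fchain_boundary (Suc p) c)"
proof -
  have fin: "finite {\<sigma>. c \<sigma> \<noteq> 0}" using c by (simp add: fsingular_chain_def)
  note supp = fchain_boundary_support[OF fin, of "Suc p"]
  have "finite {\<tau>. fchain_boundary (Suc p) c \<tau> \<noteq> 0}"
    by (rule finite_subset[OF supp]) (use fin in simp)
  moreover have "singular_simplex p Y \<tau>" if \<tau>: "fchain_boundary (Suc p) c \<tau> \<noteq> 0" for \<tau>
  proof -
    obtain \<sigma> k where "c \<sigma> \<noteq> 0" "k \<le> Suc p" "\<tau> = singular_face (Suc p) k \<sigma>"
      using \<tau> supp by auto
    then show ?thesis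
      using singular_simplex_singular_face[of "Suc p" Y \<sigma> k] c by (simp add: fsingular_chain_def)
  qed
  ultimately show ?thesis by (simp add: fsingular_chain_def)
qed

lemma subspace_fcycles: "module.subspace fscale (fcycles p Y :: ('a,'f::field) fchain set)"
proof -
  interpret vector_space "fscale :: 'f \<Rightarrow> ('a,'f) fchain \<Rightarrow> _" by (rule vector_space_fscale)
  show ?thesis
    unfolding subspace_def fcycles_def
    by (auto simp: fsingular_chain_0 fchain_boundary_0 fsingular_chain_add fsingular_chain_fscale
        fchain_boundary_add[OF fsingular_chain_finite fsingular_chain_finite]
        fchain_boundary_fscale[OF fsingular_chain_finite])
qed

lemma subspace_fboundaries: "module.subspace fscale (fboundaries p Y :: ('a,'f::field) fchain set)"
proof -
  interpret vector_space "fscale :: 'f \<Rightarrow> ('a,'f) fchain \<Rightarrow> _" by (rule vector_space_fscale)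
  have "(0::('a,'f) fchain) \<in> fboundaries p Y"
    unfolding fboundaries_def using fsingular_chain_0 fchain_boundary_0 by (metis image_eqI mem_Collect_eq)
  moreover have "x + y \<in> fboundaries p Y"
    if xy: "x \<in> fboundaries p Y" "y \<in> fboundaries p Y" for x y :: "('a,'f) fchain"
  proof -
    obtain a b where "fsingular_chain (Suc p) Y a" "fsingular_chain (Suc p) Y b"
      "x = fchain_boundary (Suc p) a" "y = fchain_boundary (Suc p) b"
      using xy unfolding fboundaries_def by blast
    then show ?thesis
      unfolding fboundaries_def
      by (auto intro!: image_eqI[of _ _ "a + b"] fsingular_chain_add
          simp: fchain_boundary_add[OF fsingular_chain_finite fsingular_chain_finite])
  qed
  moreover have "fscale r x \<in> fboundaries p Y"
    if x: "x \<in> fboundaries p Y" for r and x :: "('a,'f) fchain"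
  proof -
    obtain a where "fsingular_chain (Suc p) Y a" "x = fchain_boundary (Suc p) a"
      using x unfolding fboundaries_def by blast
    then show ?thesis
      unfolding fboundaries_def
      by (auto intro!: image_eqI[of _ _ "fscale r a"] fsingular_chain_fscale
          simp: fchain_boundary_fscale[OF fsingular_chain_finite])
  qed
  ultimately show ?thesis by (auto simp: subspace_def)
qed

lemma fboundaries_subset_fcycles: "fboundaries p Y \<subseteq> (fcycles p Y :: ('a,'f::field) fchain set)"
  unfolding fboundaries_def fcycles_def
  using fsingular_chain_boundary fchain_boundary_boundary by blast

lemma fcycles_mono:
  "S \<subseteq> T \<Longrightarrow> fcycles p (subtopology X S) \<subseteq> (fcycles p (subtopology X T) :: ('a,'f::field) fchain set)"
  unfolding fcycles_def using fsingular_chain_mono by blast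

lemma fboundaries_mono:
  "S \<subseteq> T \<Longrightarrow> fboundaries p (subtopology X S) \<subseteq> (fboundaries p (subtopology X T) :: ('a,'f::field) fchain set)"
  unfolding fboundaries_def using fsingular_chain_mono by blast

section \<open>Cycles of a separated union\<close>

lemma singular_simplex_separated_union:
  assumes "separatedin X X1 X2" "singular_simplex p (subtopology X (X1 \<union> X2)) \<sigma>"
  shows "\<sigma> ` standard_simplex p \<subseteq> X1 \<or> \<sigma> ` standard_simplex p \<subseteq> X2"
proof -
  have "singular_simplex p X \<sigma>" "\<sigma> ` standard_simplex p \<subseteq> X1 \<union> X2"
    using assms(2) by (simp_all add: singular_simplex_subtopology)
  then have "continuous_map (subtopology (powertop_real UNIV) (standard_simplex p)) X \<sigma>"
    "\<sigma> ` standard_simplex p \<subseteq> X1 \<union> X2"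
    by (simp_all add: singular_simplex_def)
  moreover have "connectedin (subtopology (powertop_real UNIV) (standard_simplex p)) (standard_simplex p)"
    by (simp add: connectedin_subtopology connectedin_standard_simplex)
  ultimately show ?thesis
    using connectedin_subset_separated_union[OF connectedin_continuous_map_image assms(1)] by blast
qed

lemma singular_face_subset_separated_union:
  assumes sep: "separatedin X X1 X2" and \<sigma>: "singular_simplex p (subtopology X (X1 \<union> X2)) \<sigma>"
    and "p \<noteq> 0" "k \<le> p"
  shows "singular_face p k \<sigma> ` standard_simplex (p - 1) \<subseteq> X1 \<longleftrightarrow> \<sigma> ` standard_simplex p \<subseteq> X1"
proof -
  have face: "singular_face p k \<sigma> ` standard_simplex (p - 1) \<subseteq> \<sigma> ` standard_simplex p"
    using assms(3,4) by (auto simp: singular_face_def simplical_face_in_standard_simplex)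
  have ne: "singular_face p k \<sigma> ` standard_simplex (p - 1) \<noteq> {}"
    using nonempty_standard_simplex by blast
  have disj: "X1 \<inter> X2 = {}" using separatedin_imp_disjoint[OF sep] by (simp add: disjnt_def)
  show ?thesis
  proof
    assume face1: "singular_face p k \<sigma> ` standard_simplex (p - 1) \<subseteq> X1"
    show "\<sigma> ` standard_simplex p \<subseteq> X1"
    proof (rule ccontr)
      assume "\<not> \<sigma> ` standard_simplex p \<subseteq> X1"
      then have "\<sigma> ` standard_simplex p \<subseteq> X2" using singular_simplex_separated_union[OF sep \<sigma>] by blast
      then have "singular_face p k \<sigma> ` standard_simplex (p - 1) \<subseteq> X1 \<inter> X2" using face face1 by blast
      then show False using ne disj by blast
    qed
  qed (use face in blast)
qed

lemma fchain_boundary_restrict: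
  assumes fin: "finite {\<sigma>. c \<sigma> \<noteq> (0::'f::field)}"
    and PQ: "\<And>\<sigma> k. c \<sigma> \<noteq> 0 \<Longrightarrow> k \<le> p \<Longrightarrow> P \<sigma> \<longleftrightarrow> Q (singular_face p k \<sigma>)"
  shows "fchain_boundary p (\<lambda>\<sigma>. if P \<sigma> then c \<sigma> else 0) = (\<lambda>\<tau>. if Q \<tau> then fchain_boundary p c \<tau> else 0)"
proof
  fix \<tau>
  define S where "S = {\<sigma>. c \<sigma> \<noteq> 0}"
  have "fchain_boundary p (\<lambda>\<sigma>. if P \<sigma> then c \<sigma> else 0) \<tau> =
      (if p = 0 then 0 else \<Sum>\<sigma>\<in>S. (if P \<sigma> then c \<sigma> else 0) * incidence p \<sigma> \<tau>)"
    by (rule fchain_boundary_eq_sum[OF fin[folded S_def]]) (auto simp: S_def)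
  also have "\<dots> = (if p = 0 then 0 else \<Sum>\<sigma>\<in>S. if Q \<tau> then c \<sigma> * incidence p \<sigma> \<tau> else 0)"
  proof (intro if_cong refl sum.cong)
    fix \<sigma> assume "\<sigma> \<in> S"
    show "(if P \<sigma> then c \<sigma> else 0) * incidence p \<sigma> \<tau> = (if Q \<tau> then c \<sigma> * incidence p \<sigma> \<tau> else 0)"
    proof (cases "incidence p \<sigma> \<tau> = (0::'f)")
      case False
      then obtain k where "k \<le> p" "singular_face p k \<sigma> = \<tau>" by (rule incidence_nonzero_imp_face)
      then show ?thesis using PQ \<open>\<sigma> \<in> S\<close> by (simp add: S_def)
    qed simp
  qed
  also have "\<dots> = (if Q \<tau> then fchain_boundary p c \<tau> else 0)"
    using fchain_boundary_eq_sum[OF fin[folded S_def], of c p \<tau>] by (simp add: S_def)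
  finally show "fchain_boundary p (\<lambda>\<sigma>. if P \<sigma> then c \<sigma> else 0) \<tau> =
      (if Q \<tau> then fchain_boundary p c \<tau> else 0)" .
qed

lemma fcycles_restrict_separated_union:
  assumes sep: "separatedin X X1 X2" and c: "c \<in> fcycles p (subtopology X (X1 \<union> X2))"
  shows "(\<lambda>\<sigma>. if \<sigma> ` standard_simplex p \<subseteq> X1 then c \<sigma> else 0) \<in> fcycles p (subtopology X X1)"
    (is "?c1 \<in> _")
proof -
  have cs: "fsingular_chain p (subtopology X (X1 \<union> X2)) c" and cb: "fchain_boundary p c = 0"
    using c by (simp_all add: fcycles_def)
  have "{\<sigma>. ?c1 \<sigma> \<noteq> 0} \<subseteq> {\<sigma>. c \<sigma> \<noteq> 0}" by auto
  then have "finite {\<sigma>. ?c1 \<sigma> \<noteq> 0}"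
    by (rule finite_subset) (use cs in \<open>simp add: fsingular_chain_def\<close>)
  moreover have "singular_simplex p (subtopology X X1) \<sigma>" if "?c1 \<sigma> \<noteq> 0" for \<sigma>
  proof -
    have "c \<sigma> \<noteq> 0" "\<sigma> ` standard_simplex p \<subseteq> X1" using that by (auto split: if_splits)
    then show ?thesis using cs by (simp add: fsingular_chain_def singular_simplex_subtopology)
  qed
  ultimately have "fsingular_chain p (subtopology X X1) ?c1" by (simp add: fsingular_chain_def)
  moreover have "fchain_boundary p ?c1 = 0"
  proof (cases "p = 0")
    case True
    then show ?thesis by (simp add: fchain_boundary_def)
  next
    case False
    have "fchain_boundary p ?c1 =
        (\<lambda>\<tau>. if \<tau> ` standard_simplex (p - 1) \<subseteq> X1 then fchain_boundary p c \<tau> else 0)"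
    proof (rule fchain_boundary_restrict)
      show "finite {\<sigma>. c \<sigma> \<noteq> 0}" using cs by (simp add: fsingular_chain_def)
    next
      fix \<sigma> k assume "c \<sigma> \<noteq> 0" "k \<le> p"
      then show "\<sigma> ` standard_simplex p \<subseteq> X1 \<longleftrightarrow> singular_face p k \<sigma> ` standard_simplex (p - 1) \<subseteq> X1"
        using singular_face_subset_separated_union[OF sep _ False \<open>k \<le> p\<close>, of \<sigma>] cs
        by (simp add: fsingular_chain_def)
    qed
    then show ?thesis by (simp add: cb fun_eq_iff)
  qed
  ultimately show ?thesis by (simp add: fcycles_def)
qed

lemma fcycles_separated_union:
  assumes sep: "separatedin X X1 X2" and c: "c \<in> fcycles p (subtopology X (X1 \<union> X2))"
  obtains c1 c2 where "c1 \<in> fcycles p (subtopology X X1)" "c2 \<in> fcycles p (subtopology X X2)"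
    "c = c1 + (c2 :: ('a,'f::field) fchain)"
proof
  let ?c1 = "\<lambda>\<sigma>. if \<sigma> ` standard_simplex p \<subseteq> X1 then c \<sigma> else 0"
  let ?c2 = "\<lambda>\<sigma>. if \<sigma> ` standard_simplex p \<subseteq> X2 then c \<sigma> else 0"
  show "?c1 \<in> fcycles p (subtopology X X1)" by (rule fcycles_restrict_separated_union[OF sep c])
  have "separatedin X X2 X1" "c \<in> fcycles p (subtopology X (X2 \<union> X1))"
    using sep c by (simp_all add: separatedin_sym Un_commute)
  then show "?c2 \<in> fcycles p (subtopology X X2)" by (rule fcycles_restrict_separated_union)
  have disj: "X1 \<inter> X2 = {}" using separatedin_imp_disjoint[OF sep] by (simp add: disjnt_def)
  have "c \<sigma> = ?c1 \<sigma> + ?c2 \<sigma>" for \<sigma>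
  proof (cases "c \<sigma> = 0")
    case False
    then have "singular_simplex p (subtopology X (X1 \<union> X2)) \<sigma>"
      using c by (simp add: fcycles_def fsingular_chain_def)
    moreover have "\<not> (\<sigma> ` standard_simplex p \<subseteq> X1 \<and> \<sigma> ` standard_simplex p \<subseteq> X2)"
      using disj nonempty_standard_simplex[of p] by blast
    ultimately show ?thesis using singular_simplex_separated_union[OF sep] by auto
  qed simp
  then show "c = ?c1 + ?c2" by (simp add: fun_eq_iff)
qed

section \<open>Homology of the filtration\<close>

lemma pscale_eq_scale_prod: "pscale = scale_prod fscale fscale"
  by (simp add: fun_eq_iff pscale_def scale_prod_def)

lemma vector_space_prod_fscale:
  "vector_space_prod (fscale :: 'f::field \<Rightarrow> ('a,'f) fchain \<Rightarrow> _) fscale"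
  by (simp add: vector_space_prod_def vector_space_fscale)

lemma fimage_cycles_topspace:
  "fimage_cycles TYPE('f::field) q X (topspace X) (topspace X) = (fcycles q X :: ('a,'f) fchain set)"
proof -
  interpret vector_space "fscale :: 'f \<Rightarrow> ('a,'f) fchain \<Rightarrow> _" by (rule vector_space_fscale)
  have "fcycles q X \<union> fboundaries q X = (fcycles q X :: ('a,'f) fchain set)"
    using fboundaries_subset_fcycles by blast
  then show ?thesis
    using subspace_fcycles[of q X] by (simp add: fimage_cycles_def)
qed

lemma bar_infty_mult_union_filtration:
  "bar_infty_mult TYPE('f::field) q X
      (\<lambda>i. if i = 0 then {} else if i = 1 then X1 else if i = 2 then X1 \<union> X2 else topspace X) 3 3
    = dim_quot fscale (fcycles q X :: ('a,'f) fchain set) (fimage_cycles TYPE('f) q X (X1 \<union> X2) (topspace X))"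
  by (simp add: bar_infty_mult_def fimage_cycles_topspace)

lemma fhomology_dim_eq_add_fimage_cycles:
  assumes "Y \<subseteq> topspace X" "fhomology_findim TYPE('f::field) q X (topspace X)"
  shows "fhomology_dim TYPE('f) q X (topspace X) =
      dim_quot fscale (fimage_cycles TYPE('f) q X Y (topspace X)) (fboundaries q X :: ('a,'f) fchain set)
      + dim_quot fscale (fcycles q X) (fimage_cycles TYPE('f) q X Y (topspace X))"
proof -
  interpret vector_space "fscale :: 'f \<Rightarrow> ('a,'f) fchain \<Rightarrow> _" by (rule vector_space_fscale)
  have "fimage_cycles TYPE('f) q X Y (topspace X) \<subseteq> fcycles q X"
    unfolding fimage_cycles_def
  proof (rule span_minimal)
    show "fcycles q (subtopology X Y) \<union> fboundaries q (subtopology X (topspace X)) \<subseteq> fcycles q X"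
      using fcycles_mono[OF assms(1), of q X] fboundaries_subset_fcycles[of q X] by simp
  qed (rule subspace_fcycles)
  moreover have "fboundaries q X \<subseteq> fimage_cycles TYPE('f) q X Y (topspace X)"
    by (auto simp: fimage_cycles_def intro: span_base)
  ultimately show ?thesis
    using dim_quot_add[OF subspace_fboundaries _ subspace_fcycles] assms(2)
    by (simp add: fhomology_dim_def fhomology_findim_def fimage_cycles_def)
qed

lemma span_differences_fcycles_separated:
  assumes sep: "separatedin X X1 X2"
  shows "module.span fscale ((\<lambda>v. fst v - snd v) `
            (fcycles q (subtopology X X1) \<times> fcycles q (subtopology X X2)) \<union> fboundaries q X)
       = fimage_cycles TYPE('f::field) q X (X1 \<union> X2) (topspace X)"
proof -
  interpret vector_space "fscale :: 'f \<Rightarrow> ('a,'f) fchain \<Rightarrow> _" by (rule vector_space_fscale)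
  let ?Z1 = "fcycles q (subtopology X X1) :: ('a,'f) fchain set"
  let ?Z2 = "fcycles q (subtopology X X2) :: ('a,'f) fchain set"
  let ?D = "(\<lambda>v. fst v - snd v) ` (?Z1 \<times> ?Z2) \<union> fboundaries q X"
  have Z0: "0 \<in> ?Z1" "0 \<in> ?Z2" using subspace_fcycles by (auto intro: subspace_0)
  have Z12: "?Z1 \<subseteq> fcycles q (subtopology X (X1 \<union> X2))" "?Z2 \<subseteq> fcycles q (subtopology X (X1 \<union> X2))"
    by (simp_all add: fcycles_mono)
  have D: "?D \<subseteq> span (fcycles q (subtopology X (X1 \<union> X2)) \<union> fboundaries q X)"
  proof
    fix x assume "x \<in> ?D"
    then show "x \<in> span (fcycles q (subtopology X (X1 \<union> X2)) \<union> fboundaries q X)"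
    proof (elim UnE imageE)
      fix v assume "v \<in> ?Z1 \<times> ?Z2" "x = fst v - snd v"
      moreover have "fst v \<in> fcycles q (subtopology X (X1 \<union> X2)) \<union> fboundaries q X"
        "snd v \<in> fcycles q (subtopology X (X1 \<union> X2)) \<union> fboundaries q X"
        using \<open>v \<in> ?Z1 \<times> ?Z2\<close> Z12 by auto
      ultimately show ?thesis using span_diff[OF span_base span_base] by simp
    qed (simp add: span_base)
  qed
  have Z1: "?Z1 \<subseteq> span ?D"
  proof -
    have "z \<in> ?D" if "z \<in> ?Z1" for z using that Z0 by (auto intro!: image_eqI[of _ _ "(z, 0)"])
    then show ?thesis using span_base by blast
  qed
  have Z2: "?Z2 \<subseteq> span ?D"
  proof
    fix z assume "z \<in> ?Z2"
    then have "- z \<in> ?D" using Z0 by (auto intro!: image_eqI[of _ _ "(0, z)"])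
    then have "- (- z) \<in> span ?D" by (intro span_neg span_base)
    then show "z \<in> span ?D" by simp
  qed
  have "fcycles q (subtopology X (X1 \<union> X2)) \<subseteq> span ?D"
  proof
    fix z :: "('a,'f) fchain" assume "z \<in> fcycles q (subtopology X (X1 \<union> X2))"
    then obtain z1 z2 where "z1 \<in> ?Z1" "z2 \<in> ?Z2" "z = z1 + z2"
      by (rule fcycles_separated_union[OF sep])
    moreover have "z1 \<in> span ?D" "z2 \<in> span ?D" using Z1 Z2 \<open>z1 \<in> ?Z1\<close> \<open>z2 \<in> ?Z2\<close> by auto
    ultimately show "z \<in> span ?D" by (simp add: span_add)
  qed
  moreover have "fboundaries q X \<subseteq> span ?D" using span_base[of _ ?D] by blast
  ultimately have "span ?D = span (fcycles q (subtopology X (X1 \<union> X2)) \<union> fboundaries q X)"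
    by (intro span_eq[THEN iffD2] conjI D Un_least)
  then show ?thesis by (simp add: fimage_cycles_def)
qed

lemma dim_quot_fcycle_pairs_eq_add:
  assumes "fhomology_findim TYPE('f::field) q X X1" "fhomology_findim TYPE('f) q X X2"
  shows "dim_quot pscale
      (fcycles q (subtopology X X1) \<times> fcycles q (subtopology X X2) :: (('a,'f) fchain \<times> _) set)
      (fboundaries q (subtopology X X1) \<times> fboundaries q (subtopology X X2))
    = fhomology_dim TYPE('f) q X X1 + fhomology_dim TYPE('f) q X X2"
proof -
  interpret vector_space_prod "fscale :: 'f \<Rightarrow> ('a,'f) fchain \<Rightarrow> _" fscale
    by (rule vector_space_prod_fscale)
  show ?thesis
    using dim_quot_Times[OF subspace_fboundaries fboundaries_subset_fcycles
        subspace_fboundaries fboundaries_subset_fcycles subspace_fcycles subspace_fcycles] assms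
    by (simp add: pscale_eq_scale_prod fhomology_dim_def fhomology_findim_def)
qed

lemma dim_quot_fcycle_pairs_eq_gamma_add:
  assumes sep: "separatedin X X1 X2"
    and fin: "fhomology_findim TYPE('f::field) q X X1" "fhomology_findim TYPE('f) q X X2"
  shows "dim_quot pscale
      (fcycles q (subtopology X X1) \<times> fcycles q (subtopology X X2) :: (('a,'f) fchain \<times> _) set)
      (fboundaries q (subtopology X X1) \<times> fboundaries q (subtopology X X2))
    = gamma_dim TYPE('f) q X X1 X2
      + dim_quot fscale (fimage_cycles TYPE('f) q X (X1 \<union> X2) (topspace X)) (fboundaries q X)"
proof -
  interpret vector_space_prod "fscale :: 'f \<Rightarrow> ('a,'f) fchain \<Rightarrow> _" fscale
    by (rule vector_space_prod_fscale)
  let ?Z1 = "fcycles q (subtopology X X1) :: ('a,'f) fchain set"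
  let ?Z2 = "fcycles q (subtopology X X2) :: ('a,'f) fchain set"
  let ?B1 = "fboundaries q (subtopology X X1) :: ('a,'f) fchain set"
  let ?B2 = "fboundaries q (subtopology X X2) :: ('a,'f) fchain set"
  let ?B = "fboundaries q X :: ('a,'f) fchain set"
  have lin: "Vector_Spaces.linear (scale_prod fscale fscale) fscale (\<lambda>v::('a,'f) fchain \<times> _. fst v - snd v)"
    by unfold_locales (auto simp: scale_prod_def fscale_def fun_eq_iff algebra_simps)
  have "?B1 \<subseteq> ?B" "?B2 \<subseteq> ?B"
    using sep fboundaries_mono[of X1 "topspace X" q X] fboundaries_mono[of X2 "topspace X" q X]
    by (auto simp: separatedin_def)
  then have diff: "(\<lambda>v. fst v - snd v) ` (?B1 \<times> ?B2) \<subseteq> ?B"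
    by (auto intro!: vs1.subspace_diff[OF subspace_fboundaries])
  have BZ: "?B1 \<times> ?B2 \<subseteq> ?Z1 \<times> ?Z2" using fboundaries_subset_fcycles by blast
  have "fin_dim_quot (scale_prod fscale fscale) (?Z1 \<times> ?Z2) (?B1 \<times> ?B2)"
    using fin_dim_quot_Times[OF subspace_fboundaries subspace_fboundaries subspace_fcycles subspace_fcycles]
      fin by (simp add: fhomology_findim_def)
  then have "dim_quot (scale_prod fscale fscale) (?Z1 \<times> ?Z2) (?B1 \<times> ?B2) =
      dim_quot (scale_prod fscale fscale) {u \<in> ?Z1 \<times> ?Z2. fst u - snd u \<in> ?B} (?B1 \<times> ?B2)
      + dim_quot fscale (fimage_cycles TYPE('f) q X (X1 \<union> X2) (topspace X)) ?B"
    using fst_pair.dim_quot_rank_nullity[OF lin subspace_Times[OF subspace_fcycles subspace_fcycles]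
        subspace_Times[OF subspace_fboundaries subspace_fboundaries] BZ subspace_fboundaries diff]
    unfolding span_differences_fcycles_separated[OF sep] by blast
  moreover have "{(z1, z2). z1 \<in> ?Z1 \<and> z2 \<in> ?Z2 \<and> z1 - z2 \<in> ?B} = {u \<in> ?Z1 \<times> ?Z2. fst u - snd u \<in> ?B}"
    by auto
  ultimately show ?thesis by (simp add: gamma_dim_def pscale_eq_scale_prod)
qed

theorem mainTheorem2:
  fixes X :: "'a topology" and X1 X2 :: "'a set" and q :: nat
  assumes "X1 \<subseteq> topspace X" and "X2 \<subseteq> topspace X"
    and "(X closure_of X1) \<inter> (X closure_of X2) = {}"
    and "fhomology_findim TYPE('f::field) q X X1"
    and "fhomology_findim TYPE('f) q X X2"
    and "fhomology_findim TYPE('f) q X (topspace X)"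
  shows "int (bar_infty_mult TYPE('f) q X
               (\<lambda>i. if i = 0 then {} else if i = 1 then X1 else if i = 2 then X1 \<union> X2 else topspace X) 3 3)
         = int (fhomology_dim TYPE('f) q X (topspace X)) - int (fhomology_dim TYPE('f) q X X1)
           - int (fhomology_dim TYPE('f) q X X2) + int (gamma_dim TYPE('f) q X X1 X2)"
proof -
  have sep: "separatedin X X1 X2"
    using assms(1-3) closure_of_subset[of X1 X] closure_of_subset[of X2 X]
    by (auto simp: separatedin_def)
  have "fhomology_dim TYPE('f) q X (topspace X) =
      dim_quot fscale (fimage_cycles TYPE('f) q X (X1 \<union> X2) (topspace X))
        (fboundaries q X :: ('a,'f) fchain set)
      + bar_infty_mult TYPE('f) q X
          (\<lambda>i. if i = 0 then {} else if i = 1 then X1 else if i = 2 then X1 \<union> X2 else topspace X) 3 3"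
    using fhomology_dim_eq_add_fimage_cycles[of "X1 \<union> X2" X q] assms(1,2,6)
    by (simp add: bar_infty_mult_union_filtration)
  moreover have "dim_quot fscale (fimage_cycles TYPE('f) q X (X1 \<union> X2) (topspace X))
        (fboundaries q X :: ('a,'f) fchain set)
      + gamma_dim TYPE('f) q X X1 X2 = fhomology_dim TYPE('f) q X X1 + fhomology_dim TYPE('f) q X X2"
    using dim_quot_fcycle_pairs_eq_add[OF assms(4,5)]
      dim_quot_fcycle_pairs_eq_gamma_add[OF sep assms(4,5)]
    by simp
  ultimately show ?thesis by linarith
qed

end
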